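(* Let $U\subset(0,1)^m$ be open and let $b:U\to\mathbb{R}$ be given by $b(x)=ax^\mu=a\prod_{i=1}^m x_i^{\mu_i}$ for some $a\in\mathbb{R}$ and $\mu\in\mathbb{R}^m$, and suppose $b$ is $C^1$-bounded (i.e. $b$ and all its first-order partial derivatives are bounded on $U$). Then there exist $A,B>0$ depending only on $b$ such that the following holds: for every integer $r>0$, every integer $l\ge1$ and all $n_1,\ldots,n_m$ with $n_i\ge r^l$ for all $i$, letting $\phi:(0,1)^m\to(0,1)^m$, $\phi(x)=(x_1^{n_1},\ldots,x_m^{n_m})$, and $V=\phi^{-1}(U)$, the map $(b\circ\phi)^{1/r^{l-1}}:V\to\mathbb{R}$ is $(\max(n_1,\ldots,n_m)A,B,0)$-mild up to order $r$.
   Context: For $V\subset\mathbb{R}^d$ open, $A,B>0$, $C\ge0$, $r$ a positive integer: $g:V\to\mathbb{R}$ is $(A,B,C)$-mild up to order $r$ if it is $C^r$ and $|g^{(\nu)}(x)|\le B^{C+1}A^{|\nu|}|\nu|!^{C+1}$ for all $x\in V$ and all $\nu\in\mathbb{N}^d$ with $|\nu|\le r$, where $g^{(\nu)}=\partial^{|\nu|}g/\partial x_1^{\nu_1}\cdots\partial x_d^{\nu_d}$ and $|\nu|=\sum\nu_i$. *)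

theory Defs
  imports "HOL-Analysis.Analysis"
begin

definition pd :: "'m::finite \<Rightarrow> (real^'m \<Rightarrow> real) \<Rightarrow> real^'m \<Rightarrow> real" where
  "pd i g x = deriv (\<lambda>t. g (x + t *\<^sub>R axis i 1)) 0"

fun Cr_on :: "nat \<Rightarrow> (real^'m::finite) set \<Rightarrow> (real^'m \<Rightarrow> real) \<Rightarrow> bool" where
  "Cr_on 0 V g = continuous_on V g"
| "Cr_on (Suc k) V g = (continuous_on V g \<and>
     (\<forall>i. \<forall>x\<in>V. (\<lambda>t. g (x + t *\<^sub>R axis i 1)) differentiable (at 0)) \<and>
     (\<forall>i. Cr_on k V (pd i g)))"

primrec pderivs :: "'m::finite list \<Rightarrow> (real^'m \<Rightarrow> real) \<Rightarrow> real^'m \<Rightarrow> real" where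
  "pderivs [] g = g"
| "pderivs (i # is) g = pd i (pderivs is g)"

text \<open>g^(nu): nu_i-fold partial derivative in direction i (for C^r functions the order is irrelevant).\<close>
definition mderiv :: "('m::finite \<Rightarrow> nat) \<Rightarrow> (real^'m \<Rightarrow> real) \<Rightarrow> real^'m \<Rightarrow> real" where
  "mderiv \<nu> g = pderivs (SOME ds. \<forall>i. count_list ds i = \<nu> i) g"

definition mild :: "real \<Rightarrow> real \<Rightarrow> real \<Rightarrow> nat \<Rightarrow> (real^'m::finite) set \<Rightarrow> (real^'m \<Rightarrow> real) \<Rightarrow> bool" where
  "mild A B C r V g \<longleftrightarrow> Cr_on r V g \<and>
     (\<forall>\<nu>::'m \<Rightarrow> nat. sum \<nu> UNIV \<le> r \<longrightarrow>
        (\<forall>x\<in>V. \<bar>mderiv \<nu> g x\<bar> \<le> B powr (C + 1) * A ^ (sum \<nu> UNIV) * (fact (sum \<nu> UNIV)) powr (C + 1)))"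

end

theory Submission
  imports Defs "HOL-Library.Multiset"
begin

text \<open>On the positive orthant, g = (b \<circ> \<phi>)^(1/R) with R = r^(l-1) is again a monomial
  c x^e with e_j = n_j \<mu>_j / R, so its derivative g^(\<nu>) is c x^(e-\<nu>) times a product of
  falling factorials e_j (e_j - 1) \<dots> (e_j - \<nu>_j + 1), each bounded by (max n * A)^\<nu>_j.
  For the monomial factor put y = \<phi>(x) and d_j = R \<nu>_j / n_j: then
  x^(e-\<nu>) = (y^(\<mu>-d))^(1/R), and n_j \<ge> r^l forces \<Sum>d_j \<le> |\<nu>|/r \<le> 1, whence
  y^(-d) \<le> 1 + \<Sum> 1/y_j. Since \<bar>\<partial>_j b(y)\<bar> = \<bar>\<mu>_j\<bar> \<bar>b(y)\<bar> / y_j, the C^1 bounds on b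
  control \<bar>a\<bar> y^(\<mu>-d) uniformly, and hence also its R-th root.\<close>

definition positive_orthant :: "(real^'m::finite) set" where
  "positive_orthant = {x. \<forall>i. 0 < x $ i}"

definition powr_monomial :: "real \<Rightarrow> ('m::finite \<Rightarrow> real) \<Rightarrow> real^'m \<Rightarrow> real" where
  "powr_monomial c p x = c * (\<Prod>j\<in>UNIV. (x $ j) powr p j)"

definition falling_factorial :: "real \<Rightarrow> nat \<Rightarrow> real" where
  "falling_factorial a k = (\<Prod>t<k. a - real t)"

lemma open_positive_orthant: "open (positive_orthant :: (real^'m::finite) set)"
proof -
  have "(positive_orthant :: (real^'m) set) = (\<Inter>i. {x. 0 < x $ i})"
    unfolding positive_orthant_def by auto
  then show ?thesis by (metis finite open_INT open_halfspace_component_gt_cart)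
qed

lemma continuous_on_powr_monomial: "continuous_on positive_orthant (powr_monomial c p)"
  unfolding powr_monomial_def positive_orthant_def
  by (auto intro!: continuous_intros) (metis less_irrefl)

lemma powr_monomial_diff:
  assumes "x \<in> positive_orthant"
  shows "powr_monomial c (\<lambda>j. p j - q j) x = powr_monomial c p x * (\<Prod>j\<in>UNIV. (1 / x $ j) powr q j)"
  using assms unfolding powr_monomial_def positive_orthant_def
  by (simp add: powr_diff powr_divide prod.distrib[symmetric] prod_dividef)

lemma has_real_derivative_axis_line_powr_monomial:
  assumes x: "x \<in> positive_orthant" and g: "\<And>y. y \<in> positive_orthant \<Longrightarrow> g y = powr_monomial c p y"
  shows "((\<lambda>t. g (x + t *\<^sub>R axis i 1)) has_real_derivative
           powr_monomial (c * p i) (\<lambda>j. p j - (if j = i then 1 else 0)) x) (at 0)"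
proof -
  let ?line = "\<lambda>t::real. x + t *\<^sub>R axis i 1"
  define P where "P = (\<Prod>j\<in>UNIV-{i}. (x $ j) powr p j)"
  have xi: "0 < x $ i" using x by (simp add: positive_orthant_def)
  have line: "powr_monomial c p (?line t) = c * ((x $ i + t) powr p i * P)" for t
    unfolding powr_monomial_def P_def
    by (subst prod.remove[of UNIV i]) (auto simp: axis_def intro!: prod.cong)
  have "((\<lambda>t. x $ i + t) has_real_derivative 1) (at 0)"
    by (auto intro!: derivative_eq_intros)
  from DERIV_fun_powr[OF this, of "p i"] xi
  have "((\<lambda>t. c * ((x $ i + t) powr p i * P)) has_real_derivative c * (p i * (x $ i) powr (p i - 1) * P)) (at 0)"
    by (intro DERIV_cmult DERIV_cmult_right) simp
  moreover have "powr_monomial (c * p i) (\<lambda>j. p j - (if j = i then 1 else 0)) x = c * (p i * (x $ i) powr (p i - 1) * P)"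
    unfolding powr_monomial_def P_def by (subst prod.remove[of UNIV i]) auto
  moreover have "\<forall>\<^sub>F t in nhds 0. g (?line t) = powr_monomial c p (?line t)"
  proof -
    have "open (?line -` positive_orthant)"
      by (intro open_vimage open_positive_orthant) (auto intro!: continuous_intros)
    then have "\<forall>\<^sub>F t in nhds 0. ?line t \<in> positive_orthant"
      using x eventually_nhds_in_open[of "?line -` positive_orthant" 0] by simp
    then show ?thesis by eventually_elim (simp add: g)
  qed
  ultimately show ?thesis by (subst DERIV_cong_ev[OF refl _ refl]) (simp_all add: line)
qed

lemma pd_powr_monomial:
  assumes "x \<in> positive_orthant" "\<And>y. y \<in> positive_orthant \<Longrightarrow> g y = powr_monomial c p y"
  shows "pd i g x = powr_monomial (c * p i) (\<lambda>j. p j - (if j = i then 1 else 0)) x"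
  unfolding pd_def using has_real_derivative_axis_line_powr_monomial[OF assms] by (rule DERIV_imp_deriv)

lemma pd_powr_monomial_eq_div:
  assumes "x \<in> positive_orthant"
  shows "pd i (powr_monomial c p) x = p i * powr_monomial c p x / x $ i"
proof -
  have "(\<Prod>j\<in>UNIV. (1 / x $ j) powr (if j = i then 1 else 0)) = (\<Prod>j\<in>UNIV. if j = i then 1 / x $ i else 1)"
    using assms by (intro prod.cong) (auto simp: positive_orthant_def less_imp_neq[symmetric] abs_of_pos)
  also have "\<dots> = 1 / x $ i" by simp
  finally have "(\<Prod>j\<in>UNIV. (1 / x $ j) powr (if j = i then 1 else 0)) = 1 / x $ i" .
  then have "powr_monomial (c * p i) (\<lambda>j. p j - (if j = i then 1 else 0)) x = p i * powr_monomial c p x / x $ i"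
    using powr_monomial_diff[OF assms, of "c * p i" p "\<lambda>j. if j = i then 1 else 0"]
    by (simp add: powr_monomial_def)
  then show ?thesis
    using pd_powr_monomial[OF assms, where g = "powr_monomial c p" and c = c and p = p] by simp
qed

lemma pderivs_powr_monomial:
  assumes "x \<in> positive_orthant" and g: "\<And>y. y \<in> positive_orthant \<Longrightarrow> g y = powr_monomial c p y"
  shows "pderivs ds g x = powr_monomial (c * (\<Prod>j\<in>UNIV. falling_factorial (p j) (count_list ds j)))
           (\<lambda>j. p j - real (count_list ds j)) x"
  using assms(1)
proof (induction ds arbitrary: x)
  case Nil
  then show ?case by (simp add: g falling_factorial_def)
next
  case (Cons i ds)
  have step: "falling_factorial (p j) (count_list (i # ds) j) =
      falling_factorial (p j) (count_list ds j) * (if j = i then p j - real (count_list ds j) else 1)" for j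
    by (simp add: falling_factorial_def)
  have "pderivs (i # ds) g x = pd i (pderivs ds g) x" by simp
  also have "\<dots> = powr_monomial (c * (\<Prod>j\<in>UNIV. falling_factorial (p j) (count_list ds j)) * (p i - real (count_list ds i)))
      (\<lambda>j. p j - real (count_list ds j) - (if j = i then 1 else 0)) x"
    using Cons by (intro pd_powr_monomial)
  also have "\<dots> = powr_monomial (c * (\<Prod>j\<in>UNIV. falling_factorial (p j) (count_list (i # ds) j)))
      (\<lambda>j. p j - real (count_list (i # ds) j)) x"
  proof -
    have "(\<Prod>j\<in>UNIV. falling_factorial (p j) (count_list (i # ds) j)) =
        (\<Prod>j\<in>UNIV. falling_factorial (p j) (count_list ds j)) * (p i - real (count_list ds i))"
      unfolding step prod.distrib by simp
    moreover have "(\<lambda>j. p j - real (count_list ds j) - (if j = i then 1 else 0)) =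
        (\<lambda>j. p j - real (count_list (i # ds) j))"
      by auto
    ultimately show ?thesis by (simp only: mult.assoc)
  qed
  finally show ?case .
qed

lemma Cr_on_powr_monomial:
  assumes V: "V \<subseteq> positive_orthant" and g: "\<And>y. y \<in> positive_orthant \<Longrightarrow> g y = powr_monomial c p y"
  shows "Cr_on k V g"
proof -
  have continuous: "continuous_on V h" if "\<And>y. y \<in> positive_orthant \<Longrightarrow> h y = powr_monomial c' p' y" for h c' p'
    using continuous_on_subset[OF continuous_on_powr_monomial V]
    by (rule continuous_on_eq) (use that V in auto)
  show ?thesis
    using g
  proof (induction k arbitrary: c p g)
    case 0
    then show ?case by (simp add: continuous)
  next
    case (Suc k)
    have "\<forall>i. \<forall>x\<in>V. (\<lambda>t. g (x + t *\<^sub>R axis i 1)) differentiable (at 0)"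
      using has_real_derivative_axis_line_powr_monomial[OF _ Suc.prems] V
      unfolding real_differentiable_def by blast
    moreover have "Cr_on k V (pd i g)" for i
      using pd_powr_monomial[OF _ Suc.prems] by (intro Suc.IH)
    ultimately show ?case using continuous[OF Suc.prems] by simp
  qed
qed

lemma mderiv_eq_pderivs:
  obtains ds where "\<And>i. count_list ds i = \<nu> i" "mderiv \<nu> g = pderivs ds g"
proof -
  obtain xs where xs: "mset xs = (\<Sum>i\<in>UNIV. replicate_mset (\<nu> i) i)"
    using ex_mset by blast
  have "count_list xs i = \<nu> i" for i
    by (simp add: count_mset[symmetric] xs count_sum)
  then have "\<exists>ds. \<forall>i. count_list ds i = \<nu> i" by blast
  from someI_ex[OF this] show ?thesis
    by (intro that) (simp_all add: mderiv_def)
qed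

lemma abs_falling_factorial_le: "\<bar>falling_factorial a k\<bar> \<le> (\<bar>a\<bar> + real k) ^ k"
proof -
  have "\<bar>falling_factorial a k\<bar> = (\<Prod>t<k. \<bar>a - real t\<bar>)"
    by (simp add: falling_factorial_def abs_prod)
  also have "\<dots> \<le> (\<Prod>t<k. \<bar>a\<bar> + real k)" by (rule prod_mono) auto
  finally show ?thesis by simp
qed

lemma abs_prod_falling_factorial_le:
  fixes a :: "'a::finite \<Rightarrow> real"
  assumes "\<And>j. \<bar>a j\<bar> + real (k j) \<le> K"
  shows "\<bar>\<Prod>j\<in>UNIV. falling_factorial (a j) (k j)\<bar> \<le> K ^ sum k UNIV"
proof -
  have "\<bar>\<Prod>j\<in>UNIV. falling_factorial (a j) (k j)\<bar> = (\<Prod>j\<in>UNIV. \<bar>falling_factorial (a j) (k j)\<bar>)"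
    by (simp add: abs_prod)
  also have "\<dots> \<le> (\<Prod>j\<in>UNIV. K ^ k j)"
  proof (intro prod_mono conjI)
    show "\<bar>falling_factorial (a j) (k j)\<bar> \<le> K ^ k j" for j
      using abs_falling_factorial_le[of "a j" "k j"] power_mono[OF assms[of j], of "k j"] by simp
  qed simp
  also have "\<dots> = K ^ sum k UNIV" by (simp add: power_sum)
  finally show ?thesis .
qed

lemma prod_inverse_powr_le:
  fixes y d :: "'a::finite \<Rightarrow> real"
  assumes y: "\<And>j. 0 < y j" and d: "\<And>j. 0 \<le> d j" "sum d UNIV \<le> 1" "\<And>j. j \<notin> S \<Longrightarrow> d j = 0"
  shows "(\<Prod>j\<in>UNIV. (1 / y j) powr d j) \<le> 1 + (\<Sum>j\<in>S. 1 / y j)"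
proof -
  define T where "T = 1 + (\<Sum>j\<in>S. 1 / y j)"
  have T1: "1 \<le> T" unfolding T_def using y by (simp add: sum_nonneg less_imp_le)
  have "1 / y j \<le> T" if "j \<in> S" for j
    using that y member_le_sum[of j S "\<lambda>j. 1 / y j"] unfolding T_def by (simp add: less_imp_le)
  then have "(1 / y j) powr d j \<le> T powr d j" for j
    using d(1,3)[of j] y[of j] T1 by (cases "j \<in> S") (auto intro: powr_mono2)
  then have "(\<Prod>j\<in>UNIV. (1 / y j) powr d j) \<le> (\<Prod>j\<in>UNIV. T powr d j)"
    by (intro prod_mono) simp
  also have "\<dots> = T powr sum d UNIV" using T1 by (simp add: powr_sum)
  also have "\<dots> \<le> T" using T1 d(2) powr_mono[of "sum d UNIV" 1 T] by simp
  finally show ?thesis unfolding T_def .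
qed

lemma abs_powr_monomial_shifted_le:
  fixes y :: "real^'m::finite"
  assumes y: "y \<in> positive_orthant"
    and M: "\<bar>powr_monomial a p y\<bar> \<le> M" "\<And>i. \<bar>pd i (powr_monomial a p) y\<bar> \<le> M"
    and d: "\<And>j. 0 \<le> d j" "sum d UNIV \<le> 1" "\<And>j. p j = 0 \<Longrightarrow> d j = 0"
  shows "\<bar>powr_monomial a (\<lambda>j. p j - d j) y\<bar> \<le> M * (1 + (\<Sum>j | p j \<noteq> 0. 1 / \<bar>p j\<bar>))"
proof -
  let ?b = "\<bar>powr_monomial a p y\<bar>"
  have y_pos: "0 < y $ j" for j using y by (simp add: positive_orthant_def)
  have b_div: "?b / y $ j \<le> M / \<bar>p j\<bar>" if "p j \<noteq> 0" for j
  proof -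
    have "\<bar>p j\<bar> * (?b / y $ j) \<le> M"
      using M(2)[of j] y_pos[of j] by (simp add: pd_powr_monomial_eq_div[OF y] abs_mult)
    then show ?thesis using that by (simp add: field_simps)
  qed
  have "\<bar>powr_monomial a (\<lambda>j. p j - d j) y\<bar> = ?b * (\<Prod>j\<in>UNIV. (1 / y $ j) powr d j)"
    by (simp add: powr_monomial_diff[OF y] abs_mult prod_nonneg)
  also have "\<dots> \<le> ?b * (1 + (\<Sum>j | p j \<noteq> 0. 1 / y $ j))"
    using d y_pos by (intro mult_left_mono prod_inverse_powr_le) auto
  also have "\<dots> = ?b + (\<Sum>j | p j \<noteq> 0. ?b / y $ j)"
    by (simp add: algebra_simps sum_distrib_left)
  also have "\<dots> \<le> M + (\<Sum>j | p j \<noteq> 0. M / \<bar>p j\<bar>)"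
    using M(1) b_div by (intro add_mono sum_mono) auto
  finally show ?thesis by (simp add: algebra_simps sum_distrib_left)
qed

lemma powr_inverse_le:
  fixes W B R :: real
  assumes "0 \<le> W" "W \<le> B" "1 \<le> B" "1 \<le> R"
  shows "W powr (1 / R) \<le> B"
proof (cases "W \<le> 1")
  case True
  then show ?thesis using assms powr_le1[of "1 / R" W] by simp
next
  case False
  then show ?thesis using assms powr_mono[of "1 / R" 1 W] by simp
qed

lemma root_powr_monomial_pullback:
  fixes x :: "real^'m::finite" and n :: "'m \<Rightarrow> nat"
  assumes "x \<in> positive_orthant" "0 < R"
  shows "root R (powr_monomial a p (\<chi> i. (x $ i) ^ n i)) = powr_monomial (root R a) (\<lambda>j. real (n j) * p j / real R) x"
proof -
  have pos: "0 < x $ j" for j using assms(1) by (simp add: positive_orthant_def)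
  have "(\<Prod>j\<in>UNIV. ((x $ j) ^ n j) powr p j) = (\<Prod>j\<in>UNIV. (x $ j) powr (real (n j) * p j))"
    by (rule prod.cong) (auto simp: powr_realpow[OF pos, symmetric] powr_powr)
  moreover have "root R (\<Prod>j\<in>UNIV. (x $ j) powr (real (n j) * p j)) = (\<Prod>j\<in>UNIV. (x $ j) powr (real (n j) * p j / real R))"
    using assms(2) by (simp add: root_powr_inverse prod_nonneg prod_powr_distrib powr_powr)
  ultimately show ?thesis by (simp add: real_root_mult powr_monomial_def)
qed

lemma abs_root_eq_powr: "0 < n \<Longrightarrow> \<bar>root n x\<bar> = \<bar>x\<bar> powr (1 / real n)"
  by (cases "x = 0") (simp_all add: real_root_abs[symmetric] root_powr_inverse)

lemma abs_powr_monomial_pullback_le: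
  fixes x :: "real^'m::finite" and n \<nu> :: "'m \<Rightarrow> nat"
  assumes x: "x \<in> positive_orthant"
    and M: "\<bar>powr_monomial a p (\<chi> i. (x $ i) ^ n i)\<bar> \<le> M"
      "\<And>i. \<bar>pd i (powr_monomial a p) (\<chi> i. (x $ i) ^ n i)\<bar> \<le> M"
    and r: "0 < r" "1 \<le> R" "\<And>j. r * R \<le> n j" "sum \<nu> UNIV \<le> r"
    and \<nu>: "\<And>j. 0 < \<nu> j \<Longrightarrow> p j \<noteq> 0"
  shows "\<bar>powr_monomial (root R a) (\<lambda>j. real (n j) * p j / real R - real (\<nu> j)) x\<bar>
           \<le> max 1 (M * (1 + (\<Sum>j | p j \<noteq> 0. 1 / \<bar>p j\<bar>)))"
proof -
  define y where "y = (\<chi> i. (x $ i) ^ n i)"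
  \<comment> \<open>chosen so that x^(n_j p_j / R - \<nu>_j) = (y_j^(p_j - d_j))^(1/R)\<close>
  define d where "d j = real R * real (\<nu> j) / real (n j)" for j
  have y: "y \<in> positive_orthant" using x by (simp add: y_def positive_orthant_def)
  have rR_n: "real r * real R \<le> real (n j)" for j using r(3)[of j] by (simp flip: of_nat_mult)
  have n_pos: "0 < real (n j)" for j using r(1,2) less_le_trans[OF _ r(3)[of j]] by simp
  have "d j \<le> real (\<nu> j) / real r" for j
  proof -
    have "d j \<le> real R * real (\<nu> j) / (real r * real R)"
      unfolding d_def using rR_n[of j] n_pos[of j] r(1,2) by (intro divide_left_mono) auto
    then show ?thesis using r(2) by simp
  qed
  then have "sum d UNIV \<le> (\<Sum>j\<in>UNIV. real (\<nu> j) / real r)"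
    by (rule sum_mono)
  also have "\<dots> = real (sum \<nu> UNIV) / real r"
    by (simp add: sum_divide_distrib)
  also have "\<dots> \<le> 1" using r(1,4) by (simp flip: of_nat_sum)
  finally have W: "\<bar>powr_monomial a (\<lambda>j. p j - d j) y\<bar> \<le> M * (1 + (\<Sum>j | p j \<noteq> 0. 1 / \<bar>p j\<bar>))"
    using \<nu> M by (intro abs_powr_monomial_shifted_le[OF y]) (auto simp: d_def y_def)
  have "(\<lambda>j. real (n j) * p j / real R - real (\<nu> j)) = (\<lambda>j. real (n j) * (p j - d j) / real R)"
    using n_pos r(2) by (auto simp: d_def field_simps)
  then have "\<bar>powr_monomial (root R a) (\<lambda>j. real (n j) * p j / real R - real (\<nu> j)) x\<bar>
      = \<bar>root R (powr_monomial a (\<lambda>j. p j - d j) y)\<bar>"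
    using root_powr_monomial_pullback[OF x, of R a] r(2) by (simp add: y_def)
  also have "\<dots> = \<bar>powr_monomial a (\<lambda>j. p j - d j) y\<bar> powr (1 / real R)"
    using r(2) by (simp add: abs_root_eq_powr)
  also have "\<dots> \<le> max 1 (M * (1 + (\<Sum>j | p j \<noteq> 0. 1 / \<bar>p j\<bar>)))"
    using W r(2) by (intro powr_inverse_le) auto
  finally show ?thesis .
qed

lemma abs_pullback_exponent_le:
  fixes n \<nu> :: "'m::finite \<Rightarrow> nat"
  assumes "1 \<le> R" "r * R \<le> n j" "sum \<nu> UNIV \<le> r"
  shows "\<bar>real (n j) * p j / real R\<bar> + real (\<nu> j) \<le> real (Max (range n)) * (1 + (\<Sum>j\<in>UNIV. \<bar>p j\<bar>))"
proof -
  have "\<nu> j \<le> sum \<nu> UNIV" by (rule member_le_sum) auto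
  then have "\<nu> j \<le> n j" using assms mult_le_mono2[OF assms(1), of r] by linarith
  moreover have "\<bar>real (n j) * p j / real R\<bar> \<le> real (n j) * \<bar>p j\<bar>"
    using assms(1) frac_le[of "real (n j) * \<bar>p j\<bar>" _ 1 "real R"] by (simp add: abs_mult)
  ultimately have "\<bar>real (n j) * p j / real R\<bar> + real (\<nu> j) \<le> real (n j) * (\<bar>p j\<bar> + 1)"
    by (simp add: algebra_simps)
  moreover have "n j \<le> Max (range n)" by (rule Max_ge) auto
  then have "real (n j) * (\<bar>p j\<bar> + 1) \<le> real (Max (range n)) * (1 + (\<Sum>j\<in>UNIV. \<bar>p j\<bar>))"
    using member_le_sum[of j UNIV "\<lambda>j. \<bar>p j\<bar>"] by (intro mult_mono) auto
  ultimately show ?thesis by linarith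
qed

lemma mild_root_pullback_powr_monomial:
  fixes U :: "(real^'m::finite) set" and n :: "'m \<Rightarrow> nat"
  assumes M: "\<And>y. y \<in> U \<Longrightarrow> \<bar>powr_monomial a p y\<bar> \<le> M \<and> (\<forall>i. \<bar>pd i (powr_monomial a p) y\<bar> \<le> M)"
    and r: "0 < r" "1 \<le> R" "\<And>j. r * R \<le> n j"
  shows "mild (real (Max (range n)) * (1 + (\<Sum>j\<in>UNIV. \<bar>p j\<bar>)))
           (max 1 (M * (1 + (\<Sum>j | p j \<noteq> 0. 1 / \<bar>p j\<bar>)))) 0 r
           ({x. \<forall>i. 0 < x $ i \<and> x $ i < 1} \<inter> (\<lambda>x. \<chi> i. (x $ i) ^ n i) -` U)
           (\<lambda>x. root R (powr_monomial a p (\<chi> i. (x $ i) ^ n i)))"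
    (is "mild (?N * ?A) ?B 0 r ?V ?g")
proof -
  define e where "e = (\<lambda>j. real (n j) * p j / real R)"
  have V: "?V \<subseteq> positive_orthant" by (auto simp: positive_orthant_def)
  have g: "?g y = powr_monomial (root R a) e y" if "y \<in> positive_orthant" for y
    using root_powr_monomial_pullback[OF that] r(2) by (simp add: e_def)
  have "\<bar>mderiv \<nu> ?g x\<bar> \<le> ?B * (?N * ?A) ^ sum \<nu> UNIV" if \<nu>: "sum \<nu> UNIV \<le> r" and x: "x \<in> ?V" for \<nu> x
  proof -
    define \<Phi> where "\<Phi> = (\<Prod>j\<in>UNIV. falling_factorial (e j) (\<nu> j))"
    obtain ds where ds: "\<And>i. count_list ds i = \<nu> i" "mderiv \<nu> ?g = pderivs ds ?g"
      using mderiv_eq_pderivs[of \<nu> ?g] by blast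
    have "mderiv \<nu> ?g x = powr_monomial (root R a * \<Phi>) (\<lambda>j. e j - real (\<nu> j)) x"
      using pderivs_powr_monomial[of x ?g "root R a" e ds] x V g by (auto simp: ds \<Phi>_def)
    then have "\<bar>mderiv \<nu> ?g x\<bar> = \<bar>\<Phi>\<bar> * \<bar>powr_monomial (root R a) (\<lambda>j. e j - real (\<nu> j)) x\<bar>"
      by (simp add: powr_monomial_def abs_mult)
    also have "\<dots> \<le> (?N * ?A) ^ sum \<nu> UNIV * ?B"
    proof (cases "\<Phi> = 0")
      case False
      have "\<bar>e j\<bar> + real (\<nu> j) \<le> ?N * ?A" for j
        unfolding e_def using r(2,3) \<nu> by (rule abs_pullback_exponent_le)
      then have \<Phi>_le: "\<bar>\<Phi>\<bar> \<le> (?N * ?A) ^ sum \<nu> UNIV"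
        unfolding \<Phi>_def by (rule abs_prod_falling_factorial_le)
      \<comment> \<open>the factor x_j^(-\<nu>_j) is unbounded on V, but it only occurs where p_j \<noteq> 0\<close>
      have "p j \<noteq> 0" if "0 < \<nu> j" for j
      proof
        assume "p j = 0"
        then have "falling_factorial (e j) (\<nu> j) = 0"
          using that by (auto simp: e_def falling_factorial_def)
        then show False using False by (auto simp: \<Phi>_def)
      qed
      then have monomial_le: "\<bar>powr_monomial (root R a) (\<lambda>j. e j - real (\<nu> j)) x\<bar> \<le> ?B"
        using x M \<nu> r unfolding e_def by (intro abs_powr_monomial_pullback_le) (auto simp: positive_orthant_def)
      show ?thesis using \<Phi>_le monomial_le by (intro mult_mono) auto
    qed simp
    finally show ?thesis by (simp add: mult.commute)
  qed
  moreover have "?B * (?N * ?A) ^ k \<le> ?B * (?N * ?A) ^ k * fact k" for k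
  proof -
    have "0 \<le> ?B * (?N * ?A) ^ k" by (auto simp: sum_nonneg max_def)
    from mult_left_mono[OF fact_ge_1 this] show ?thesis by simp
  qed
  ultimately show ?thesis
    unfolding mild_def using Cr_on_powr_monomial[OF V g] by (auto intro: order_trans)
qed

theorem mainTheorem4:
  fixes U :: "(real^'m::finite) set" and a :: real and \<mu> :: "real^'m"
  assumes "open U"
    and "U \<subseteq> {x. \<forall>i. 0 < x $ i \<and> x $ i < 1}"
    and "\<exists>M. \<forall>x\<in>U. \<bar>a * (\<Prod>i\<in>UNIV. (x $ i) powr (\<mu> $ i))\<bar> \<le> M \<and>
             (\<forall>i. \<bar>pd i (\<lambda>y. a * (\<Prod>j\<in>UNIV. (y $ j) powr (\<mu> $ j))) x\<bar> \<le> M)"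
  shows "\<exists>A B::real. A > 0 \<and> B > 0 \<and>
    (\<forall>(r::nat) (l::nat) (n::'m \<Rightarrow> nat). r > 0 \<longrightarrow> l \<ge> 1 \<longrightarrow> (\<forall>i. n i \<ge> r ^ l) \<longrightarrow>
       mild (real (Max (range n)) * A) B 0 r
         ({x. \<forall>i. 0 < x $ i \<and> x $ i < 1} \<inter> (\<lambda>x. \<chi> i. (x $ i) ^ n i) -` U)
         (\<lambda>x. root (r ^ (l - 1)) (a * (\<Prod>j\<in>UNIV. ((\<chi> i. (x $ i) ^ n i) $ j) powr (\<mu> $ j)))))"
proof -
  obtain M where M: "\<And>y. y \<in> U \<Longrightarrow> \<bar>powr_monomial a (($) \<mu>) y\<bar> \<le> M \<and>
      (\<forall>i. \<bar>pd i (powr_monomial a (($) \<mu>)) y\<bar> \<le> M)"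
    using assms(3) unfolding powr_monomial_def by blast
  let ?A = "1 + (\<Sum>j\<in>UNIV. \<bar>\<mu> $ j\<bar>)"
  let ?B = "max 1 (M * (1 + (\<Sum>j | \<mu> $ j \<noteq> 0. 1 / \<bar>\<mu> $ j\<bar>)))"
  have mild_pullback: "mild (real (Max (range n)) * ?A) ?B 0 r
      ({x. \<forall>i. 0 < x $ i \<and> x $ i < 1} \<inter> (\<lambda>x. \<chi> i. (x $ i) ^ n i) -` U)
      (\<lambda>x. root (r ^ (l - 1)) (a * (\<Prod>j\<in>UNIV. ((\<chi> i. (x $ i) ^ n i) $ j) powr (\<mu> $ j))))"
    if r: "0 < r" and l: "1 \<le> l" and n: "\<forall>i. r ^ l \<le> n i" for r l :: nat and n :: "'m \<Rightarrow> nat"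
  proof -
    have "r * r ^ (l - 1) \<le> n i" for i
      using l n power_Suc[of r "l - 1"] by simp
    with mild_root_pullback_powr_monomial[OF M r, where R = "r ^ (l - 1)" and n = n] r
    show ?thesis by (simp add: powr_monomial_def)
  qed
  show ?thesis
    by (rule exI[of _ ?A], rule exI[of _ ?B], intro conjI allI impI mild_pullback)
      (auto simp: sum_nonneg add_pos_nonneg)
qed

end
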